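(* Let $(F_n)$ be the Fibonacci numbers ($F_0=0$, $F_1=1$, $F_{n+2}=F_{n+1}+F_n$), $(E_n)$ the sequence with $E_0=0$, $E_1=E_2=1$, $E_{n+3}=E_n+E_{n+2}$, and $(D_n)$ the sequence with $D_0=1$, $D_1=D_2=0$, $D_{n+3}=D_n+D_{n+1}$ (all indexed by $\mathbb Z$). Then for every fixed integer $k\ge 0$, $$\lim_{n\to+\infty}(E_{n-k}-D_n)=\lim_{n\to+\infty}(F_{n-k}-E_n)=+\infty.$$ *)

theory Defs
  imports Complex_Main "HOL-Number_Theory.Fib"
begin

fun seqE :: "nat \<Rightarrow> int" where
  "seqE 0 = 0"
| "seqE (Suc 0) = 1"
| "seqE (Suc (Suc 0)) = 1"
| "seqE (Suc (Suc (Suc n))) = seqE n + seqE (Suc (Suc n))"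

fun seqD :: "nat \<Rightarrow> int" where
  "seqD 0 = 1"
| "seqD (Suc 0) = 0"
| "seqD (Suc (Suc 0)) = 0"
| "seqD (Suc (Suc (Suc n))) = seqD n + seqD (Suc n)"

end

theory Submission
  imports Defs "HOL-Real_Asymp.Multiseries_Expansion"
begin

text \<open>
  Each of the three recurrences is sandwiched between geometric sequences by induction along
  its own recursion: \<open>D\<^sub>n \<le> (4/3)\<^sup>n\<close>, \<open>E\<^sub>n \<le> (3/2)\<^sup>n\<close> from above, and \<open>E\<^sub>n \<ge> c (7/5)\<^sup>n\<close>,
  \<open>F\<^sub>n \<ge> c (8/5)\<^sup>n\<close> from below. Since \<open>4/3 < 7/5\<close> and \<open>3/2 < 8/5\<close>, a fixed shift \<open>k\<close> only costs
  a constant factor, and the faster geometric growth wins.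
\<close>

lemma filterlim_shifted_diff_at_top:
  fixes f g :: "nat \<Rightarrow> int" and a b c :: real
  assumes "0 < c" "\<bar>b\<bar> < a" "1 < a"
    and lower: "\<forall>\<^sub>F n in sequentially. c * a ^ n \<le> f n"
    and upper: "\<forall>\<^sub>F n in sequentially. g n \<le> b ^ n"
  shows "filterlim (\<lambda>n. f (n - k) - g n) at_top sequentially"
proof -
  have "\<forall>\<^sub>F n in sequentially. c * a ^ (n - k) \<le> f (n - k)"
    using eventually_compose_filterlim[OF lower filterlim_minus_const_nat_at_top] .
  moreover have "\<forall>\<^sub>F n in sequentially. a ^ n = a ^ (n - k) * a ^ k"
    using eventually_ge_at_top[of k] by eventually_elim (simp flip: power_add)
  ultimately have bound:
    "\<forall>\<^sub>F n in sequentially. (c / a ^ k - (b / a) ^ n) * a ^ n \<le> real_of_int (f (n - k) - g n)"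
    using upper by eventually_elim (use \<open>1 < a\<close> in \<open>simp add: algebra_simps power_divide\<close>)
  have "((\<lambda>n. c / a ^ k - (b / a) ^ n) \<longlongrightarrow> c / a ^ k - 0) sequentially"
    using assms(2,3) by (intro tendsto_intros) simp
  moreover have "filterlim (\<lambda>n. a ^ n) at_top sequentially"
    using \<open>1 < a\<close>
    by (intro filterlim_at_infinity_imp_filterlim_at_top filterlim_realpow_sequentially_gt1) auto
  ultimately have "filterlim (\<lambda>n. (c / a ^ k - (b / a) ^ n) * a ^ n) at_top sequentially"
    using \<open>0 < c\<close> \<open>1 < a\<close> by (intro filterlim_tendsto_pos_mult_at_top[where c = "c / a ^ k"]) auto
  then show ?thesis
    using bound by (simp add: filterlim_at_top_int_iff_filterlim_real filterlim_at_top_mono)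
qed

lemma seqD_le_power: "real_of_int (seqD n) \<le> (4/3) ^ n"
proof (induction n rule: seqD.induct)
  case (4 n)
  have "(4/3 :: real) ^ n + (4/3) ^ Suc n \<le> (4/3) ^ Suc (Suc (Suc n))"
    using mult_left_mono[of "1 + 4/3" "(4/3) ^ 3" "(4/3 :: real) ^ n"] by (simp add: algebra_simps)
  with 4 show ?case unfolding seqD.simps of_int_add by linarith
qed auto

lemma seqE_le_power: "real_of_int (seqE n) \<le> (3/2) ^ n"
proof (induction n rule: seqE.induct)
  case (4 n)
  have "(3/2 :: real) ^ n + (3/2) ^ Suc (Suc n) \<le> (3/2) ^ Suc (Suc (Suc n))"
    using mult_left_mono[of "1 + (3/2) ^ 2" "(3/2) ^ 3" "(3/2 :: real) ^ n"] by (simp add: algebra_simps)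
  with 4 show ?case unfolding seqE.simps of_int_add by linarith
qed auto

lemma seqE_ge_power:
  assumes "1 \<le> n"
  shows "5/14 * (7/5) ^ n \<le> real_of_int (seqE n)"
proof -
  have "5/14 * (7/5) ^ Suc m \<le> real_of_int (seqE (Suc m))" for m
  proof (induction m rule: seqE.induct)
    case (4 m)
    have "(7/5 :: real) ^ Suc (Suc (Suc (Suc m))) \<le> (7/5) ^ Suc m + (7/5) ^ Suc (Suc (Suc m))"
      using mult_left_mono[of "(7/5) ^ 4" "7/5 + (7/5) ^ 3" "(7/5 :: real) ^ m"] by (simp add: algebra_simps)
    with 4 show ?case unfolding seqE.simps of_int_add by linarith
  qed auto
  moreover obtain m where "n = Suc m"
    using assms by (cases n) auto
  ultimately show ?thesis by simp
qed

lemma fib_ge_power: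
  assumes "1 \<le> n"
  shows "5/16 * (8/5) ^ n \<le> real (fib n)"
proof -
  have "5/16 * (8/5) ^ Suc m \<le> real (fib (Suc m))" for m
  proof (induction m rule: fib.induct)
    case (3 m)
    have "(8/5 :: real) ^ Suc (Suc (Suc m)) \<le> (8/5) ^ Suc (Suc m) + (8/5) ^ Suc m"
      using mult_left_mono[of "(8/5) ^ 3" "(8/5) ^ 2 + 8/5" "(8/5 :: real) ^ m"] by (simp add: algebra_simps)
    with 3 show ?case unfolding fib.simps of_nat_add by linarith
  qed auto
  moreover obtain m where "n = Suc m"
    using assms by (cases n) auto
  ultimately show ?thesis by simp
qed

theorem theorem13:
  fixes k :: nat
  shows "filterlim (\<lambda>n. seqE (n - k) - seqD n) at_top sequentially
       \<and> filterlim (\<lambda>n. int (fib (n - k)) - seqE n) at_top sequentially"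
proof
  have E_lower: "\<forall>\<^sub>F n in sequentially. 5/14 * (7/5) ^ n \<le> real_of_int (seqE n)"
    using eventually_ge_at_top[of 1] by eventually_elim (rule seqE_ge_power)
  show "filterlim (\<lambda>n. seqE (n - k) - seqD n) at_top sequentially"
    by (intro filterlim_shifted_diff_at_top[where b = "4/3", OF _ _ _ E_lower])
      (auto simp: seqD_le_power)
  have fib_lower: "\<forall>\<^sub>F n in sequentially. 5/16 * (8/5) ^ n \<le> real_of_int (int (fib n))"
    using eventually_ge_at_top[of 1] by eventually_elim (metis fib_ge_power of_int_of_nat_eq)
  show "filterlim (\<lambda>n. int (fib (n - k)) - seqE n) at_top sequentially"
    by (intro filterlim_shifted_diff_at_top[where b = "3/2", OF _ _ _ fib_lower])
      (auto simp: seqE_le_power)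
qed

end
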